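(* Let $G=K_{r_1,\dots,r_k}$ with $|V(G)|$ odd and partition sets $X_1,\dots,X_k$, and let $H$ be a good bisection of $G$ with partition sets $V_1,V_2$ such that $|V_1|=|V_2|+1$. Let $\mathcal X_0'$ be the set of those $X_i$ that cross $H$, have $|X_i|$ even, and satisfy $\big||X_i\cap V_1|-|X_i\cap V_2|\big|=2$; let $\mathcal X_1$ be the set of those $X_i$ that cross $H$ and have $|X_i|$ odd. Let $W_1=\bigcup_{X_i\in\mathcal X_1}X_i$, $W_0=\bigcup_{X_i\in\mathcal X_0'}X_i$, $t=|\mathcal X_1|$, $t'=|\mathcal X_0'|$. Then (i) $|W_1\cap V_1|-|W_1\cap V_2|=t$; (ii) $|W_0\cap V_1|-|W_0\cap V_2|=2t'$; (iii) $|\overline{W_1\cup W_0}\cap V_1|-|\overline{W_1\cup W_0}\cap V_2|=-(t+2t'-1)$.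
   Context: A bisection of a graph $G$ is a bipartite spanning subgraph $H$ of $G$ with partition sets $V_1,V_2$ (every edge of $H$ joins $V_1$ and $V_2$) with $||V_1|-|V_2||\le 1$. It is good if $2d_H(v)\ge d_G(v)-1$ for every $v\in V(G)$. For $W\subseteq V(G)$, $\overline{W}=V(G)\setminus W$. A partition set $X_i$ crosses $H$ if $X_i\cap V_1\neq\emptyset$ and $X_i\cap V_2\ne\emptyset$. *)

theory Defs
  imports Main
begin

definition simple_graph :: "'a set \<Rightarrow> ('a \<Rightarrow> 'a \<Rightarrow> bool) \<Rightarrow> bool" where
  "simple_graph V E \<longleftrightarrow> finite V \<and>
     (\<forall>u v. E u v \<longrightarrow> u \<in> V \<and> v \<in> V \<and> u \<noteq> v \<and> E v u)"

definition degree :: "'a set \<Rightarrow> ('a \<Rightarrow> 'a \<Rightarrow> bool) \<Rightarrow> 'a \<Rightarrow> nat" where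
  "degree V E v = card {u \<in> V. E v u}"

definition complete_multipartite ::
  "'a set \<Rightarrow> ('a \<Rightarrow> 'a \<Rightarrow> bool) \<Rightarrow> nat \<Rightarrow> (nat \<Rightarrow> 'a set) \<Rightarrow> bool" where
  "complete_multipartite V E k X \<longleftrightarrow> finite V \<and>
     V = (\<Union>i<k. X i) \<and>
     (\<forall>i<k. X i \<noteq> {}) \<and>
     (\<forall>i<k. \<forall>j<k. i \<noteq> j \<longrightarrow> X i \<inter> X j = {}) \<and>
     (\<forall>u v. E u v \<longleftrightarrow> (\<exists>i<k. \<exists>j<k. i \<noteq> j \<and> u \<in> X i \<and> v \<in> X j))"

definition bisection ::
  "'a set \<Rightarrow> ('a \<Rightarrow> 'a \<Rightarrow> bool) \<Rightarrow> ('a \<Rightarrow> 'a \<Rightarrow> bool) \<Rightarrow> 'a set \<Rightarrow> 'a set \<Rightarrow> bool" where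
  "bisection V E EH V1 V2 \<longleftrightarrow>
     simple_graph V EH \<and> (\<forall>u v. EH u v \<longrightarrow> E u v) \<and>
     V1 \<union> V2 = V \<and> V1 \<inter> V2 = {} \<and>
     (\<forall>u v. EH u v \<longrightarrow> (u \<in> V1 \<and> v \<in> V2) \<or> (u \<in> V2 \<and> v \<in> V1)) \<and>
     \<bar>int (card V1) - int (card V2)\<bar> \<le> 1"

definition good_bisection ::
  "'a set \<Rightarrow> ('a \<Rightarrow> 'a \<Rightarrow> bool) \<Rightarrow> ('a \<Rightarrow> 'a \<Rightarrow> bool) \<Rightarrow> 'a set \<Rightarrow> 'a set \<Rightarrow> bool" where
  "good_bisection V E EH V1 V2 \<longleftrightarrow> bisection V E EH V1 V2 \<and>
     (\<forall>v\<in>V. 2 * int (degree V EH v) \<ge> int (degree V E v) - 1)"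

definition crosses :: "'a set \<Rightarrow> 'a set \<Rightarrow> 'a set \<Rightarrow> bool" where
  "crosses Xi V1 V2 \<longleftrightarrow> Xi \<inter> V1 \<noteq> {} \<and> Xi \<inter> V2 \<noteq> {}"

end

theory Submission
  imports Defs
begin

text \<open>A vertex v of a part X_i has degree |V| - |X_i| in G, and in the bisection H all its
  neighbours lie on the other side outside X_i. Goodness at a vertex of X_i \<inter> V_1 therefore
  gives |X_i \<inter> V_1| \<ge> |X_i \<inter> V_2|, and at a vertex of X_i \<inter> V_2 it gives
  |X_i \<inter> V_1| \<le> |X_i \<inter> V_2| + 2 (using |V_1| = |V_2| + 1). So a crossing part of odd size
  has surplus exactly 1 on V_1, and the parts in (ii) have surplus exactly 2. Summing over the
  disjoint parts gives (i) and (ii), and (iii) follows since the total surplus is 1.\<close>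

lemma complete_multipartite_parts:
  assumes "complete_multipartite V E k X"
  shows "finite V" and "\<And>i. i < k \<Longrightarrow> X i \<subseteq> V"
    and "\<And>i j. i < k \<Longrightarrow> j < k \<Longrightarrow> i \<noteq> j \<Longrightarrow> X i \<inter> X j = {}"
  using assms unfolding complete_multipartite_def by blast+

lemma complete_multipartite_neighbours:
  assumes G: "complete_multipartite V E k X" and i: "i < k" and v: "v \<in> X i"
  shows "{u \<in> V. E v u} = V - X i"
proof -
  have V: "V = (\<Union>j<k. X j)"
    and E: "\<And>u w. E u w \<longleftrightarrow> (\<exists>i<k. \<exists>j<k. i \<noteq> j \<and> u \<in> X i \<and> w \<in> X j)"
    using G unfolding complete_multipartite_def by blast+
  note disj = complete_multipartite_parts(3)[OF G]
  show ?thesis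
  proof (intro set_eqI iffI)
    fix u
    assume "u \<in> {u \<in> V. E v u}"
    then obtain a b where "a < k" "b < k" "a \<noteq> b" "v \<in> X a" "u \<in> X b" "u \<in> V"
      using E by blast
    moreover have "a = i"
      using disj[of a i] calculation i v by blast
    moreover have "X a \<inter> X b = {}"
      using disj calculation by blast
    ultimately show "u \<in> V - X i"
      by blast
  next
    fix u
    assume u: "u \<in> V - X i"
    then obtain b where "b < k" "u \<in> X b"
      using V by blast
    moreover have "b \<noteq> i"
      using u calculation by blast
    ultimately show "u \<in> {u \<in> V. E v u}"
      using E i v u by blast
  qed
qed

lemma bisection_swap:
  "bisection V E EH V1 V2 \<Longrightarrow> bisection V E EH V2 V1"
  unfolding bisection_def by auto

lemma good_bisection_swap:
  "good_bisection V E EH V1 V2 \<Longrightarrow> good_bisection V E EH V2 V1"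
  unfolding good_bisection_def using bisection_swap by blast

lemma bisection_card_Int_split:
  assumes H: "bisection V E EH V1 V2" and Y: "Y \<subseteq> V"
  shows "card Y = card (Y \<inter> V1) + card (Y \<inter> V2)"
proof -
  have "finite V" "V1 \<union> V2 = V" "V1 \<inter> V2 = {}"
    using H unfolding bisection_def simple_graph_def by blast+
  then have "card ((Y \<inter> V1) \<union> (Y \<inter> V2)) = card (Y \<inter> V1) + card (Y \<inter> V2)"
    using Y by (intro card_Un_disjoint) (auto intro: finite_subset)
  moreover have "(Y \<inter> V1) \<union> (Y \<inter> V2) = Y"
    using Y \<open>V1 \<union> V2 = V\<close> by blast
  ultimately show ?thesis
    by simp
qed

lemma good_bisection_neighbourhood_bound:
  assumes H: "good_bisection V E EH V1 V2" and v: "v \<in> V1"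
    and N: "{u \<in> V. E v u} = V - Y" and Y: "Y \<subseteq> V"
  shows "int (card V) - int (card Y) - 1 \<le> 2 * int (card (V2 - Y))"
proof -
  have B: "bisection V E EH V1 V2"
    and good: "\<forall>v\<in>V. 2 * int (degree V EH v) \<ge> int (degree V E v) - 1"
    using H unfolding good_bisection_def by blast+
  have fin: "finite V" and V: "V1 \<union> V2 = V" and D: "V1 \<inter> V2 = {}"
    using B unfolding bisection_def simple_graph_def by blast+
  have "{u \<in> V. EH v u} \<subseteq> V2 - Y"
  proof
    fix u assume u: "u \<in> {u \<in> V. EH v u}"
    then have "E v u"
      using B unfolding bisection_def by blast
    with u N have "u \<notin> Y" by blast
    moreover have "u \<in> V2"
      using u v D B unfolding bisection_def by blast
    ultimately show "u \<in> V2 - Y" by blast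
  qed
  then have "degree V EH v \<le> card (V2 - Y)"
    unfolding degree_def using fin V by (intro card_mono) auto
  moreover have "degree V E v = card V - card Y"
    unfolding degree_def N using fin Y by (simp add: card_Diff_subset finite_subset)
  moreover have "card Y \<le> card V"
    using fin Y by (rule card_mono)
  moreover have "int (degree V E v) - 1 \<le> 2 * int (degree V EH v)"
    using good v V by blast
  ultimately show ?thesis
    by linarith
qed

lemma crossing_part_balance:
  assumes G: "complete_multipartite V E k X"
    and H: "good_bisection V E EH V1 V2"
    and sizes: "card V1 = card V2 + 1"
    and i: "i < k" and cross: "crosses (X i) V1 V2"
  shows "card (X i \<inter> V2) \<le> card (X i \<inter> V1)"
    and "card (X i \<inter> V1) \<le> card (X i \<inter> V2) + 2"
proof -
  have B: "bisection V E EH V1 V2"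
    using H unfolding good_bisection_def by blast
  have fin: "finite V" and V: "V1 \<union> V2 = V"
    using B unfolding bisection_def simple_graph_def by blast+
  have XV: "X i \<subseteq> V"
    using complete_multipartite_parts(2)[OF G i] .
  have N: "\<And>v. v \<in> X i \<Longrightarrow> {u \<in> V. E v u} = V - X i"
    using complete_multipartite_neighbours[OF G i] .
  have "V \<inter> V1 = V1" "V \<inter> V2 = V2"
    using V by blast+
  then have card_V: "card V = card V1 + card V2"
    using bisection_card_Int_split[OF B order_refl] by simp
  have fin1: "finite V1" "finite V2"
    using fin V by (metis finite_Un)+
  have card_X: "card (X i) = card (X i \<inter> V1) + card (X i \<inter> V2)"
    using bisection_card_Int_split[OF B XV] .
  have "card (X i \<inter> V1) \<le> card V1" "card (X i \<inter> V2) \<le> card V2"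
    using fin1 by (simp_all add: card_mono)
  then have card_diff: "int (card (V1 - X i)) = int (card V1) - int (card (X i \<inter> V1))"
      "int (card (V2 - X i)) = int (card V2) - int (card (X i \<inter> V2))"
    using fin1 by (simp_all add: card_Diff_subset_Int Int_commute of_nat_diff)
  obtain v1 v2 where v1: "v1 \<in> X i" "v1 \<in> V1" and v2: "v2 \<in> X i" "v2 \<in> V2"
    using cross unfolding crosses_def by blast
  have "int (card V) - int (card (X i)) - 1 \<le> 2 * int (card (V2 - X i))"
    using good_bisection_neighbourhood_bound[OF H v1(2) N[OF v1(1)] XV] .
  moreover have "int (card V) - int (card (X i)) - 1 \<le> 2 * int (card (V1 - X i))"
    using good_bisection_neighbourhood_bound[OF good_bisection_swap[OF H] v2(2) N[OF v2(1)] XV] .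
  moreover have "int (card V) = 2 * int (card V2) + 1"
    "int (card (X i)) = int (card (X i \<inter> V1)) + int (card (X i \<inter> V2))"
    "int (card V1) = int (card V2) + 1"
    using card_V card_X sizes by simp_all
  ultimately have "int (card (X i \<inter> V2)) \<le> int (card (X i \<inter> V1))"
    "int (card (X i \<inter> V1)) \<le> int (card (X i \<inter> V2)) + 2"
    using card_diff by linarith+
  then show "card (X i \<inter> V2) \<le> card (X i \<inter> V1)"
    and "card (X i \<inter> V1) \<le> card (X i \<inter> V2) + 2"
    by simp_all
qed

lemma odd_crossing_part_surplus:
  assumes G: "complete_multipartite V E k X"
    and H: "good_bisection V E EH V1 V2"
    and sizes: "card V1 = card V2 + 1"
    and i: "i < k" and cross: "crosses (X i) V1 V2" and odd: "odd (card (X i))"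
  shows "int (card (X i \<inter> V1)) - int (card (X i \<inter> V2)) = 1"
proof -
  have "card (X i) = card (X i \<inter> V1) + card (X i \<inter> V2)"
    using H complete_multipartite_parts(2)[OF G i]
    unfolding good_bisection_def by (blast intro: bisection_card_Int_split)
  then show ?thesis
    using crossing_part_balance[OF G H sizes i cross] odd by presburger
qed

lemma card_Int_UN_surplus:
  assumes I: "finite I" and fin: "\<And>i. i \<in> I \<Longrightarrow> finite (X i)"
    and disj: "\<And>i j. i \<in> I \<Longrightarrow> j \<in> I \<Longrightarrow> i \<noteq> j \<Longrightarrow> X i \<inter> X j = {}"
    and c: "\<And>i. i \<in> I \<Longrightarrow> int (card (X i \<inter> A)) - int (card (X i \<inter> B)) = c"
  shows "int (card ((\<Union>i\<in>I. X i) \<inter> A)) - int (card ((\<Union>i\<in>I. X i) \<inter> B)) = c * int (card I)"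
proof -
  have card_UN: "card ((\<Union>i\<in>I. X i) \<inter> C) = (\<Sum>i\<in>I. card (X i \<inter> C))" for C
  proof -
    have "(\<Union>i\<in>I. X i) \<inter> C = (\<Union>i\<in>I. X i \<inter> C)"
      by blast
    also have "card \<dots> = (\<Sum>i\<in>I. card (X i \<inter> C))"
    proof (rule card_UN_disjoint[OF I])
      show "\<forall>i\<in>I. finite (X i \<inter> C)"
        using fin by blast
      show "\<forall>i\<in>I. \<forall>j\<in>I. i \<noteq> j \<longrightarrow> X i \<inter> C \<inter> (X j \<inter> C) = {}"
        using disj by blast
    qed
    finally show ?thesis .
  qed
  have "int (card ((\<Union>i\<in>I. X i) \<inter> A)) - int (card ((\<Union>i\<in>I. X i) \<inter> B))
      = (\<Sum>i\<in>I. int (card (X i \<inter> A)) - int (card (X i \<inter> B)))"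
    unfolding card_UN by (simp add: sum_subtractf)
  also have "\<dots> = (\<Sum>i\<in>I. c)"
    using c by (rule sum.cong[OF refl])
  finally show ?thesis
    by simp
qed

lemma card_Int_Diff_Un_disjoint:
  assumes V: "finite V" and W: "W1 \<subseteq> V" "W0 \<subseteq> V" "W1 \<inter> W0 = {}" and A: "A \<subseteq> V"
  shows "int (card ((V - (W1 \<union> W0)) \<inter> A))
       = int (card A) - int (card (W1 \<inter> A)) - int (card (W0 \<inter> A))"
proof -
  have fin: "finite A" "finite W1" "finite W0"
    using V W A by (auto intro: finite_subset)
  have "(V - (W1 \<union> W0)) \<inter> A = A - (W1 \<union> W0) \<inter> A"
    using A by blast
  then have "card ((V - (W1 \<union> W0)) \<inter> A) = card A - card ((W1 \<union> W0) \<inter> A)"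
    using fin by (simp add: card_Diff_subset)
  moreover have "card ((W1 \<union> W0) \<inter> A) = card (W1 \<inter> A) + card (W0 \<inter> A)"
    using fin W by (simp add: Int_Un_distrib2 card_Un_disjoint disjoint_iff)
  moreover have "card ((W1 \<union> W0) \<inter> A) \<le> card A"
    using fin by (simp add: card_mono)
  ultimately show ?thesis
    by linarith
qed

theorem lemma3p2:
  fixes V :: "'a set" and E EH :: "'a \<Rightarrow> 'a \<Rightarrow> bool"
    and k :: nat and X :: "nat \<Rightarrow> 'a set" and V1 V2 :: "'a set"
  assumes G: "complete_multipartite V E k X"
    and odd_V: "odd (card V)"
    and H: "good_bisection V E EH V1 V2"
    and sizes: "card V1 = card V2 + 1"
  defines "W1 \<equiv> (\<Union>i\<in>{i. i < k \<and> crosses (X i) V1 V2 \<and> odd (card (X i))}. X i)"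
    and "W0 \<equiv> (\<Union>i\<in>{i. i < k \<and> crosses (X i) V1 V2 \<and> even (card (X i)) \<and>
                  \<bar>int (card (X i \<inter> V1)) - int (card (X i \<inter> V2))\<bar> = 2}. X i)"
    and "t \<equiv> card {i. i < k \<and> crosses (X i) V1 V2 \<and> odd (card (X i))}"
    and "t' \<equiv> card {i. i < k \<and> crosses (X i) V1 V2 \<and> even (card (X i)) \<and>
                  \<bar>int (card (X i \<inter> V1)) - int (card (X i \<inter> V2))\<bar> = 2}"
  shows "int (card (W1 \<inter> V1)) - int (card (W1 \<inter> V2)) = int t
     \<and> int (card (W0 \<inter> V1)) - int (card (W0 \<inter> V2)) = 2 * int t'
     \<and> int (card ((V - (W1 \<union> W0)) \<inter> V1)) - int (card ((V - (W1 \<union> W0)) \<inter> V2))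
           = - (int t + 2 * int t' - 1)"
proof -
  define I1 where "I1 = {i. i < k \<and> crosses (X i) V1 V2 \<and> odd (card (X i))}"
  define I0 where "I0 = {i. i < k \<and> crosses (X i) V1 V2 \<and> even (card (X i)) \<and>
                  \<bar>int (card (X i \<inter> V1)) - int (card (X i \<inter> V2))\<bar> = 2}"
  have W: "W1 = (\<Union>i\<in>I1. X i)" "W0 = (\<Union>i\<in>I0. X i)" "t = card I1" "t' = card I0"
    unfolding W1_def W0_def t_def t'_def I1_def I0_def by (rule refl)+
  have fin: "finite V" and XV: "\<And>i. i < k \<Longrightarrow> X i \<subseteq> V"
    and disj: "\<And>i j. i < k \<Longrightarrow> j < k \<Longrightarrow> i \<noteq> j \<Longrightarrow> X i \<inter> X j = {}"
    using complete_multipartite_parts[OF G] by blast+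
  have I: "I1 \<subseteq> {..<k}" "I0 \<subseteq> {..<k}"
    unfolding I1_def I0_def by auto
  then have fin_I: "finite I1" "finite I0"
    by (auto intro: finite_subset)
  have fin_X: "\<And>i. i < k \<Longrightarrow> finite (X i)"
    using fin XV by (blast intro: finite_subset)
  have "int (card (W1 \<inter> V1)) - int (card (W1 \<inter> V2)) = 1 * int t"
    unfolding W using fin_I fin_X disj I
    by (intro card_Int_UN_surplus) (auto simp: I1_def intro: odd_crossing_part_surplus[OF G H sizes])
  moreover have "int (card (W0 \<inter> V1)) - int (card (W0 \<inter> V2)) = 2 * int t'"
    unfolding W using fin_I fin_X disj I crossing_part_balance(1)[OF G H sizes]
    by (intro card_Int_UN_surplus) (auto simp: I0_def)
  moreover have "W1 \<inter> W0 = {}"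
    unfolding W I1_def I0_def using disj by fastforce
  moreover have "W1 \<subseteq> V" "W0 \<subseteq> V" "V1 \<subseteq> V" "V2 \<subseteq> V"
    using H I XV unfolding W good_bisection_def bisection_def by blast+
  ultimately show ?thesis
    using card_Int_Diff_Un_disjoint[OF fin] sizes by simp
qed

end
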